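(* Let $n,m,d$ be positive integers with $n=dm$ and $\gcd(d,m)=1$, and let $r,t\in\mathbb{Z}$ with $\gcd(r,n)=1$. Then \[\kappa(n,r,t)=\frac{|r|_n\,\kappa(d,r,t)\,\kappa(m,r,t)}{\gcd\left(\kappa(d,r,t),|r|_n\right)\gcd\left(\kappa(m,r,t),|r|_n\right)}.\] In particular, $\kappa(d,r,t)$ divides $\kappa(n,r,t)$.
   Context: For an integer $m\geq1$ and an integer $r$ with $\gcd(r,m)=1$, $|r|_m$ denotes the multiplicative order of $r$ modulo $m$ (so $|r|_1=1$). For $k\geq1$, $S_k(x):=1+x+\cdots+x^{k-1}$, and $S_0(x):=0$. For integers $n\geq1$, $r,t$ with $\gcd(r,n)=1$, $\kappa(n,r,t):=\dfrac{n\,|r|_n}{\gcd\left(n,\ t\,S_{|r|_n}(r)\right)}$. *)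

theory Defs
  imports "HOL-Number_Theory.Number_Theory"
begin

definition S :: "nat \<Rightarrow> int \<Rightarrow> int" where
  "S k x = (\<Sum>i<k. x ^ i)"

text \<open>kappa(n,r,t) = n |r|_n / gcd(n, t S_{|r|_n}(r)); |r|_n is the library's ord n r
  (multiplicative order, ord 1 r = 1). The division is exact since the gcd divides n.\<close>
definition kappa :: "int \<Rightarrow> int \<Rightarrow> int \<Rightarrow> int" where
  "kappa n r t = (n * int (ord n r)) div gcd n (t * S (ord n r) r)"

end

theory Submission
  imports Defs
begin

(* kappa N r t is the order of the affine map x \<mapsto> r x + t on Z/N: its k-th iterate is
   x \<mapsto> r^k x + t S_k(r), so kappa N r t divides k exactly when r^k = 1 mod N and
   N divides t S_k(r).  For n = d m with gcd(d,m) = 1 the Chinese remainder theorem makes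
   kappa n the lcm of kappa d and kappa m.  This lcm is a multiple of Z = |r|_n, and
   gcd(kappa d, kappa m) divides Z because kappa N divides |r|_N N.  For such a Z between the
   gcd and the lcm of X and Y one has gcd(X,Z) gcd(Y,Z) = Z gcd(X,Y), which turns
   lcm(X,Y) = X Y / gcd(X,Y) into the stated formula. *)

lemma cong_power_1_int_iff_nat:
  fixes n r :: int
  assumes "n > 0"
  shows "[r ^ k = 1] (mod n) \<longleftrightarrow> [nat (r mod n) ^ k = 1] (mod nat n)"
proof -
  have "[r ^ k = 1] (mod n) \<longleftrightarrow> [(r mod n) ^ k = 1] (mod n)"
    by (simp add: cong_def power_mod)
  also have "\<dots> \<longleftrightarrow> [int (nat (r mod n) ^ k) = int 1] (mod int (nat n))"
    using assms by simp
  finally show ?thesis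
    by (simp only: cong_int_iff)
qed

lemma ord_int_eq_ord_nat:
  fixes n r :: int
  assumes "n > 0"
  shows "ord n r = ord (nat n) (nat (r mod n))"
proof -
  have "coprime n r \<longleftrightarrow> coprime (nat n) (nat (r mod n))"
    using assms by (simp flip: coprime_int_iff)
  then show ?thesis
    using assms by (simp add: ord_def cong_power_1_int_iff_nat)
qed

lemma ord_divides_int:
  fixes n r :: int
  assumes "n > 0"
  shows "[r ^ k = 1] (mod n) \<longleftrightarrow> ord n r dvd k"
  using assms by (simp add: cong_power_1_int_iff_nat ord_int_eq_ord_nat ord_divides')

lemma ord_pos_int:
  fixes n r :: int
  assumes "n > 0" "coprime n r"
  shows "ord n r > 0"
  using assms by (simp add: ord_int_eq_ord_nat flip: coprime_int_iff)

lemma ord_dvd_ord_if_dvd_int: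
  fixes d n r :: int
  assumes "d > 0" "n > 0" "d dvd n"
  shows "ord d r dvd ord n r"
  using assms ord_divides_int[of n r "ord n r"] ord_divides_int[of d r "ord n r"]
  by (meson cong_dvd_modulus dvd_refl)

lemma dvd_mult_iff_div_gcd_dvd:
  fixes n c q :: "'a :: {idom, semiring_gcd}"
  assumes "n \<noteq> 0"
  shows "n dvd c * q \<longleftrightarrow> n div gcd n c dvd q"
proof -
  define g where "g = gcd n c"
  have "g \<noteq> 0" using assms by (simp add: g_def)
  have n: "n = g * (n div g)" and c: "c = g * (c div g)"
    by (simp_all add: g_def)
  have "coprime (n div g) (c div g)"
    using assms by (simp add: g_def div_gcd_coprime)
  have "n dvd c * q \<longleftrightarrow> g * (n div g) dvd g * (c div g * q)"
    by (subst n, subst c) (simp add: mult.assoc)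
  also have "\<dots> \<longleftrightarrow> n div g dvd c div g * q"
    using \<open>g \<noteq> 0\<close> by simp
  also have "\<dots> \<longleftrightarrow> n div g dvd q"
    using \<open>coprime (n div g) (c div g)\<close> by (simp add: coprime_dvd_mult_right_iff)
  finally show ?thesis by (simp add: g_def)
qed

lemma S_add: "S (a + b) x = S a x + x ^ a * S b x"
  by (induction b) (auto simp: S_def algebra_simps power_add)

lemma S_mult: "S (a * q) x = S a x * S q (x ^ a)"
proof (induction q)
  case 0
  then show ?case by (simp add: S_def)
next
  case (Suc q)
  have "S (a * Suc q) x = S (a * q) x + x ^ (a * q) * S a x"
    by (metis S_add add.commute mult_Suc_right)
  also have "\<dots> = S a x * (S q (x ^ a) + (x ^ a) ^ q)"
    using Suc by (simp add: algebra_simps power_mult)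
  also have "S q (x ^ a) + (x ^ a) ^ q = S (Suc q) (x ^ a)"
    by (simp add: S_def)
  finally show ?case .
qed

lemma cong_S_if_cong_1:
  fixes y N :: int
  assumes "[y = 1] (mod N)"
  shows "[S q y = int q] (mod N)"
proof (induction q)
  case 0
  then show ?case by (simp add: S_def)
next
  case (Suc q)
  have "[S q y + y ^ q = int q + 1 ^ q] (mod N)"
    using Suc assms by (intro cong_add cong_pow)
  then show ?case by (simp add: S_def add.commute)
qed

lemma kappa_altdef:
  fixes N r t :: int
  shows "kappa N r t = int (ord N r) * (N div gcd N (t * S (ord N r) r))"
  by (simp add: kappa_def div_mult_swap mult.commute)

lemma kappa_pos:
  fixes N r t :: int
  assumes "N > 0" "coprime N r"
  shows "kappa N r t > 0"
proof -
  have "N div gcd N (t * S (ord N r) r) > 0"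
    using assms(1) by (simp add: pos_imp_zdiv_pos_iff)
  then show ?thesis
    using ord_pos_int[OF assms] by (simp add: kappa_altdef)
qed

lemma ord_dvd_kappa: "int (ord N r) dvd kappa N r t"
  by (simp add: kappa_altdef)

lemma kappa_dvd_ord_mult: "kappa N r t dvd int (ord N r) * N"
proof -
  have "N div gcd N c dvd N" for c
    by (metis dvd_div_mult_self dvd_triv_left gcd_dvd1)
  then show ?thesis
    by (simp add: kappa_altdef mult_dvd_mono)
qed

lemma kappa_dvd_iff:
  fixes N r t :: int
  assumes "N > 0" "coprime N r"
  shows "kappa N r t dvd int k \<longleftrightarrow> [r ^ k = 1] (mod N) \<and> N dvd t * S k r"
proof (cases "ord N r dvd k")
  case True
  define o' where "o' = ord N r"
  define c where "c = t * S o' r"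
  obtain q where k: "k = o' * q"
    using True by (auto simp: o'_def)
  have "[S k r = S o' r * int q] (mod N)"
    unfolding k S_mult
    using cong_S_if_cong_1[of "r ^ o'" N q] ord_divides_int[OF assms(1), of r o']
    by (simp add: o'_def cong_scalar_left)
  then have "[t * S k r = c * int q] (mod N)"
    by (simp add: c_def cong_scalar_left mult.assoc)
  then have "N dvd t * S k r \<longleftrightarrow> N dvd c * int q"
    by (rule cong_dvd_iff)
  also have "\<dots> \<longleftrightarrow> N div gcd N c dvd int q"
    using assms(1) by (simp add: dvd_mult_iff_div_gcd_dvd)
  also have "\<dots> \<longleftrightarrow> kappa N r t dvd int k"
    using ord_pos_int[OF assms] by (simp add: kappa_altdef k c_def o'_def)
  finally show ?thesis
    using True ord_divides_int[OF assms(1)] by blast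
next
  case False
  then have "\<not> kappa N r t dvd int k"
    using ord_dvd_kappa[of N r t] by (meson dvd_trans int_dvd_int_iff)
  then show ?thesis
    using False ord_divides_int[OF assms(1)] by blast
qed

lemma eq_lcm_if_dvd_of_nat_iff:
  fixes K A B :: int
  assumes "K \<ge> 0" and "\<And>k :: nat. K dvd int k \<longleftrightarrow> A dvd int k \<and> B dvd int k"
  shows "K = lcm A B"
proof (rule zdvd_antisym_nonneg)
  show "K dvd lcm A B"
    using assms(2)[of "nat (lcm A B)"] by simp
  show "lcm A B dvd K"
    using assms(1) assms(2)[of "nat K"] by simp
qed (use assms(1) in simp_all)

lemma kappa_modulus_mult_coprime:
  fixes d m r t :: int
  assumes "d > 0" "m > 0" "coprime d m" "coprime (d * m) r"
  shows "kappa (d * m) r t = lcm (kappa d r t) (kappa m r t)"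
proof (rule eq_lcm_if_dvd_of_nat_iff)
  have "d * m > 0" "coprime d r" "coprime m r"
    using assms by simp_all
  then show "kappa (d * m) r t \<ge> 0"
    using kappa_pos[of "d * m" r t] assms(4) by simp
  have cong_iff: "[x = 1] (mod d * m) \<longleftrightarrow> [x = 1] (mod d) \<and> [x = 1] (mod m)" for x
    using assms(3) by (metis coprime_cong_mult cong_modulus_mult mult.commute)
  have dvd_iff: "d * m dvd y \<longleftrightarrow> d dvd y \<and> m dvd y" for y
    using assms(3) by (meson divides_mult dvd_mult_left dvd_mult_right)
  show "kappa (d * m) r t dvd int k \<longleftrightarrow> kappa d r t dvd int k \<and> kappa m r t dvd int k" for k
    unfolding kappa_dvd_iff[OF \<open>d * m > 0\<close> assms(4)] kappa_dvd_iff[OF assms(1) \<open>coprime d r\<close>]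
      kappa_dvd_iff[OF assms(2) \<open>coprime m r\<close>] cong_iff dvd_iff
    by blast
qed

(* Prime by prime: min(x,z) + min(y,z) = z + min(x,y) whenever min(x,y) \<le> z \<le> max(x,y). *)
lemma gcd_mult_gcd_eq:
  fixes X Y Z :: int
  assumes "Z \<ge> 0" "Z dvd lcm X Y" "gcd X Y dvd Z"
  shows "gcd X Z * gcd Y Z = Z * gcd X Y"
proof -
  have "Z * gcd X Y dvd lcm X Y * gcd X Y"
    using assms(2) by (rule mult_dvd_mono) simp
  then have dvd_XY: "Z * gcd X Y dvd X * Y"
    by (simp flip: abs_mult)
  have dvd_ZZ: "Z * gcd X Y dvd Z * Z"
    using assms(3) by simp
  have "gcd X Z * gcd Y Z = gcd (X * gcd Y Z) (Z * gcd Y Z)"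
    by (simp add: gcd_mult_right gcd.commute)
  also have "\<dots> = gcd (gcd (X * Y) (X * Z)) (gcd (Z * Y) (Z * Z))"
    using assms(1) by (simp add: gcd_mult_left)
  also have "\<dots> = gcd (gcd (Z * X) (Z * Y)) (gcd (X * Y) (Z * Z))"
    by (simp only: gcd.assoc gcd.commute gcd.left_commute mult.commute)
  also have "\<dots> = gcd (Z * gcd X Y) (gcd (X * Y) (Z * Z))"
    using assms(1) by (simp add: gcd_mult_left)
  also have "\<dots> = Z * gcd X Y"
    using assms(1) dvd_XY dvd_ZZ by simp
  finally show ?thesis .
qed

lemma lcm_eq_mult_div_gcd_mult_gcd:
  fixes X Y Z :: int
  assumes "X > 0" "Y > 0" "Z > 0" "Z dvd lcm X Y" "gcd X Y dvd Z"
  shows "lcm X Y = Z * X * Y div (gcd X Z * gcd Y Z)"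
proof -
  have "lcm X Y = X * Y div gcd X Y"
    using assms(1,2) by (simp add: lcm_altdef_int)
  also have "\<dots> = Z * X * Y div (Z * gcd X Y)"
    using assms(3) by (simp add: mult.assoc)
  also have "\<dots> = Z * X * Y div (gcd X Z * gcd Y Z)"
    using assms(3-5) by (simp add: gcd_mult_gcd_eq)
  finally show ?thesis .
qed

lemma gcd_kappa_dvd_ord_mult:
  fixes d m r t :: int
  assumes "d > 0" "m > 0" "coprime d m"
  shows "gcd (kappa d r t) (kappa m r t) dvd int (ord (d * m) r)"
proof -
  let ?o = "int (ord (d * m) r)"
  have "kappa N r t dvd ?o * N" if "N > 0" "N dvd d * m" for N
  proof -
    have "int (ord N r) dvd ?o"
      using assms that by (simp add: ord_dvd_ord_if_dvd_int)
    then show ?thesis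
      by (meson dvd_trans kappa_dvd_ord_mult mult_dvd_mono dvd_refl)
  qed
  then have "kappa d r t dvd ?o * d" "kappa m r t dvd ?o * m"
    using assms(1,2) by simp_all
  then have "gcd (kappa d r t) (kappa m r t) dvd gcd (?o * d) (?o * m)"
    by (rule gcd_mono)
  also have "gcd (?o * d) (?o * m) = ?o"
    using assms(3) by (simp add: gcd_mult_left)
  finally show ?thesis .
qed

theorem lemma3p3:
  fixes n m d r t :: int
  assumes "n > 0" "m > 0" "d > 0" "n = d * m" "gcd d m = 1" "gcd r n = 1"
  shows "kappa n r t =
           (int (ord n r) * kappa d r t * kappa m r t) div
           (gcd (kappa d r t) (int (ord n r)) * gcd (kappa m r t) (int (ord n r)))
         \<and> kappa d r t dvd kappa n r t"
proof -
  have "coprime d m" "coprime n r"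
    using assms(5,6) by (simp_all add: coprime_iff_gcd_eq_1 gcd.commute)
  then have "coprime d r" "coprime m r"
    using assms(4) by simp_all
  have kappa_n: "kappa n r t = lcm (kappa d r t) (kappa m r t)"
    using kappa_modulus_mult_coprime \<open>coprime d m\<close> \<open>coprime n r\<close> assms(2-4) by blast
  have "int (ord n r) dvd lcm (kappa d r t) (kappa m r t)"
    using ord_dvd_kappa[of n r t] by (simp only: kappa_n)
  moreover have "gcd (kappa d r t) (kappa m r t) dvd int (ord n r)"
    using gcd_kappa_dvd_ord_mult \<open>coprime d m\<close> assms(2-4) by blast
  moreover have "kappa d r t > 0" "kappa m r t > 0" "int (ord n r) > 0"
    using kappa_pos ord_pos_int \<open>coprime d r\<close> \<open>coprime m r\<close> \<open>coprime n r\<close> assms(1-3)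
    by simp_all
  ultimately have "lcm (kappa d r t) (kappa m r t) = (int (ord n r) * kappa d r t * kappa m r t)
      div (gcd (kappa d r t) (int (ord n r)) * gcd (kappa m r t) (int (ord n r)))"
    by (intro lcm_eq_mult_div_gcd_mult_gcd)
  then show ?thesis
    unfolding kappa_n by (rule conjI[OF _ dvd_lcm1])
qed

end
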